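(* Let $(S,\mathcal{E})$ be a qualitative evidence frame and let $\mathfrak{F}$ be a set of evidence allocation functions on $(S,\mathcal{E})$. Define $u:2^{\mathcal{E}}\to\tau_{\mathcal{E}}$ by $u(\mathbf{E})=\bigcup\mathbf{E}$ if $\mathbf{E}\neq\emptyset$ and $u(\emptyset)=S$. Then $\mathfrak{F}\cup\{u\}$ is a set of evidence allocation functions on $(S,\mathcal{E})$.
   Context: A qualitative evidence frame is a pair $(S,\mathcal{E})$ where $S$ is a finite nonempty set (of possible states) and $\mathcal{E}$ is a nonempty family of subsets of $S$ with $\emptyset\notin\mathcal{E}$ and $S\notin\mathcal{E}$. For any family $\mathbf{E}\subseteq 2^S$, $\tau_{\mathbf{E}}$ denotes the topology on $S$ generated by $\mathbf{E}$ (as a subbasis): it consists of $\emptyset$, $S$, all finite intersections of members of $\mathbf{E}$, and all arbitrary unions of such finite intersections. For $\mathbf{E}\subseteq\mathcal{E}$, an element $D\in\tau_{\mathbf{E}}$ is called dense in $\bigcup\mathbf{E}$ w.r.t. $\tau_{\mathbf{E}}$ if $D\cap T\neq\emptyset$ for every nonempty $T\in\tau_{\mathbf{E}}$. A set of evidence allocation functions on $(S,\mathcal{E})$ is a set $\mathfrak{F}$ of functions $2^{\mathcal{E}}\to\tau_{\mathcal{E}}$ such that for all $f,g\in\mathfrak{F}$: (1) $f(\emptyset)=S$; (2) for every nonempty $\mathbf{E}\subseteq\mathcal{E}$, either $f(\mathbf{E})=\emptyset$, or $f(\mathbf{E})\in\tau_{\mathbf{E}}$ and $f(\mathbf{E})$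 is dense in $\bigcup\mathbf{E}$ w.r.t. $\tau_{\mathbf{E}}$; (3) for every $\mathbf{E}\subseteq\mathcal{E}$, $f(\mathbf{E})\subseteq g(\mathbf{E})$ or $g(\mathbf{E})\subseteq f(\mathbf{E})$. *)

theory Defs
  imports Main
begin

definition qual_evidence_frame :: "'a set \<Rightarrow> 'a set set \<Rightarrow> bool" where
  "qual_evidence_frame S \<E> \<longleftrightarrow> finite S \<and> S \<noteq> {} \<and> \<E> \<noteq> {} \<and> \<E> \<subseteq> Pow S
     \<and> {} \<notin> \<E> \<and> S \<notin> \<E>"

definition fin_inters :: "'a set set \<Rightarrow> 'a set set" where
  "fin_inters B = {\<Inter> F | F. finite F \<and> F \<noteq> {} \<and> F \<subseteq> B}"

(* topology on S generated by B as a subbasis: empty set, S, and unions of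
   finite intersections (the empty union gives the empty set) *)
definition gen_topology :: "'a set \<Rightarrow> 'a set set \<Rightarrow> 'a set set" where
  "gen_topology S B = insert S {\<Union> U | U. U \<subseteq> fin_inters B}"

definition dense_wrt :: "'a set \<Rightarrow> 'a set set \<Rightarrow> 'a set \<Rightarrow> bool" where
  "dense_wrt S B D \<longleftrightarrow> D \<in> gen_topology S B \<and>
     (\<forall>T\<in>gen_topology S B. T \<noteq> {} \<longrightarrow> D \<inter> T \<noteq> {})"

definition evidence_allocation_functions ::
  "'a set \<Rightarrow> 'a set set \<Rightarrow> ('a set set \<Rightarrow> 'a set) set \<Rightarrow> bool" where
  "evidence_allocation_functions S \<E> \<FF> \<longleftrightarrow>
     (\<forall>f\<in>\<FF>.
        (\<forall>Es. Es \<subseteq> \<E> \<longrightarrow> f Es \<in> gen_topology S \<E>) \<and>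
        f {} = S \<and>
        (\<forall>Es. Es \<subseteq> \<E> \<and> Es \<noteq> {} \<longrightarrow>
           f Es = {} \<or> (f Es \<in> gen_topology S Es \<and> dense_wrt S Es (f Es))) \<and>
        (\<forall>g\<in>\<FF>. \<forall>Es. Es \<subseteq> \<E> \<longrightarrow> f Es \<subseteq> g Es \<or> g Es \<subseteq> f Es))"

end

theory Submission
  imports Defs
begin

text \<open>Every open set of the topology on \<open>S\<close> generated by a family \<open>B\<close> is \<open>S\<close> itself or lies
  inside \<open>\<Union>B\<close>. Hence \<open>\<Union>Es\<close> is open and dense for the topology generated by \<open>Es\<close>, and it is
  comparable with every allocated set \<open>f Es\<close>, which is empty, \<open>S\<close>, or a subset of \<open>\<Union>Es\<close>.\<close>

lemma Union_in_gen_topology: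
  assumes "Es \<subseteq> B"
  shows "\<Union> Es \<in> gen_topology S B"
proof -
  have "e \<in> fin_inters B" if "e \<in> Es" for e
    unfolding fin_inters_def using that assms by (intro CollectI exI[of _ "{e}"]) auto
  then show ?thesis
    unfolding gen_topology_def by blast
qed

lemma space_in_gen_topology: "S \<in> gen_topology S B"
  unfolding gen_topology_def by simp

lemma gen_topology_eq_or_subset_Union:
  "T \<in> gen_topology S B \<Longrightarrow> T = S \<or> T \<subseteq> \<Union> B"
  unfolding gen_topology_def fin_inters_def by blast

lemma dense_wrt_Union:
  assumes "\<Union> B \<subseteq> S" and "\<Union> B \<noteq> {}"
  shows "dense_wrt S B (\<Union> B)"
  unfolding dense_wrt_def
  using assms Union_in_gen_topology[of B B S] gen_topology_eq_or_subset_Union[of _ S B]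
  by (metis inf.absorb_iff2 inf.orderE order_refl)

definition evidence_allocation :: "'a set \<Rightarrow> 'a set set \<Rightarrow> ('a set set \<Rightarrow> 'a set) \<Rightarrow> bool" where
  "evidence_allocation S \<E> f \<longleftrightarrow>
     (\<forall>Es. Es \<subseteq> \<E> \<longrightarrow> f Es \<in> gen_topology S \<E>) \<and>
     f {} = S \<and>
     (\<forall>Es. Es \<subseteq> \<E> \<and> Es \<noteq> {} \<longrightarrow>
        f Es = {} \<or> (f Es \<in> gen_topology S Es \<and> dense_wrt S Es (f Es)))"

lemma evidence_allocation_functions_iff:
  "evidence_allocation_functions S \<E> \<FF> \<longleftrightarrow>
     (\<forall>f\<in>\<FF>. evidence_allocation S \<E> f) \<and>
     (\<forall>f\<in>\<FF>. \<forall>g\<in>\<FF>. \<forall>Es. Es \<subseteq> \<E> \<longrightarrow> f Es \<subseteq> g Es \<or> g Es \<subseteq> f Es)"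
  unfolding evidence_allocation_functions_def evidence_allocation_def
  by (simp add: ball_conj_distrib conj_assoc)

lemma evidence_allocation_functions_insert:
  assumes "evidence_allocation_functions S \<E> \<FF>" and "evidence_allocation S \<E> u"
    and "\<And>f Es. f \<in> \<FF> \<Longrightarrow> Es \<subseteq> \<E> \<Longrightarrow> f Es \<subseteq> u Es \<or> u Es \<subseteq> f Es"
  shows "evidence_allocation_functions S \<E> (insert u \<FF>)"
proof -
  have comparable_\<FF>: "f Es \<subseteq> g Es \<or> g Es \<subseteq> f Es"
    if "f \<in> \<FF>" "g \<in> \<FF>" "Es \<subseteq> \<E>" for f g Es
    using assms(1) that unfolding evidence_allocation_functions_iff by blast
  have "f Es \<subseteq> g Es \<or> g Es \<subseteq> f Es"
    if "f \<in> insert u \<FF>" "g \<in> insert u \<FF>" "Es \<subseteq> \<E>" for f g Es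
    using that comparable_\<FF> assms(3)[of f Es] assms(3)[of g Es] by blast
  then show ?thesis
    using assms(1,2) unfolding evidence_allocation_functions_iff by simp
qed

lemma evidence_allocation_eq_or_subset_Union:
  assumes "evidence_allocation S \<E> f" and "Es \<subseteq> \<E>" and "Es \<noteq> {}"
  shows "f Es = S \<or> f Es \<subseteq> \<Union> Es"
proof -
  have "\<forall>Es. Es \<subseteq> \<E> \<and> Es \<noteq> {} \<longrightarrow>
      f Es = {} \<or> (f Es \<in> gen_topology S Es \<and> dense_wrt S Es (f Es))"
    using assms(1) unfolding evidence_allocation_def by (elim conjE)
  then have "f Es = {} \<or> f Es \<in> gen_topology S Es"
    using assms(2,3) by blast
  then show ?thesis
    using gen_topology_eq_or_subset_Union by blast
qed

definition union_allocation :: "'a set \<Rightarrow> 'a set set \<Rightarrow> 'a set" where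
  "union_allocation S Es = (if Es = {} then S else \<Union> Es)"

lemma evidence_allocation_union_allocation:
  assumes "\<E> \<subseteq> Pow S" and "{} \<notin> \<E>"
  shows "evidence_allocation S \<E> (union_allocation S)"
  unfolding evidence_allocation_def
proof (intro conjI allI impI)
  fix Es
  show "union_allocation S Es \<in> gen_topology S \<E>" if "Es \<subseteq> \<E>"
    using that by (simp add: union_allocation_def space_in_gen_topology Union_in_gen_topology)
  assume Es: "Es \<subseteq> \<E> \<and> Es \<noteq> {}"
  then have union_Es: "union_allocation S Es = \<Union> Es"
    by (simp add: union_allocation_def)
  have "\<Union> Es \<subseteq> S"
    using Es assms(1) by blast
  moreover have "\<Union> Es \<noteq> {}"
    using Es assms(2) by (metis Union_empty_conv ex_in_conv subsetD)
  ultimately have "dense_wrt S Es (\<Union> Es)"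
    by (rule dense_wrt_Union)
  then show "union_allocation S Es = {} \<or>
      (union_allocation S Es \<in> gen_topology S Es \<and> dense_wrt S Es (union_allocation S Es))"
    unfolding union_Es using Union_in_gen_topology by blast
qed (simp add: union_allocation_def)

lemma union_allocation_comparable:
  assumes "\<E> \<subseteq> Pow S" and "evidence_allocation S \<E> f" and "Es \<subseteq> \<E>"
  shows "f Es \<subseteq> union_allocation S Es \<or> union_allocation S Es \<subseteq> f Es"
proof (cases "Es = {}")
  case True
  then show ?thesis
    using assms(2) unfolding evidence_allocation_def union_allocation_def by simp
next
  case False
  have "\<Union> Es \<subseteq> S"
    using assms(1,3) by blast
  then show ?thesis
    using False evidence_allocation_eq_or_subset_Union[OF assms(2,3) False]
    unfolding union_allocation_def by auto
qed

theorem proposition2: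
  fixes S :: "'a set" and \<E> :: "'a set set" and \<FF> :: "('a set set \<Rightarrow> 'a set) set"
  assumes "qual_evidence_frame S \<E>"
    and "evidence_allocation_functions S \<E> \<FF>"
  shows "evidence_allocation_functions S \<E>
           (\<FF> \<union> {(\<lambda>Es. if Es = {} then S else \<Union> Es)})"
proof -
  have frame: "\<E> \<subseteq> Pow S" "{} \<notin> \<E>"
    using assms(1) unfolding qual_evidence_frame_def by auto
  have members: "evidence_allocation S \<E> f" if "f \<in> \<FF>" for f
    using assms(2) that unfolding evidence_allocation_functions_iff by blast
  have "evidence_allocation_functions S \<E> (insert (union_allocation S) \<FF>)"
    using assms(2) evidence_allocation_union_allocation[OF frame]
      union_allocation_comparable[OF frame(1) members]
    by (rule evidence_allocation_functions_insert)
  then show ?thesis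
    by (simp add: union_allocation_def[abs_def])
qed

end
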